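(* For all configurations $C$ of the CK machine: if $C \to C'$, then $[\![C]\!] \xrightarrow{\tau} [\![C']\!]$; and if $[\![C]\!] \xrightarrow{\tau} P$, then there exists a configuration $C'$ such that $P = [\![C']\!]$.
   Context: HOcore processes: $P,Q ::= a(x).P \mid \overline{a}\langle P\rangle \mid P \parallel Q \mid x \mid 0$ ($a$ channel names, $x$ process variables, $a(x).P$ binds $x$, $\parallel$ associative and commutative with unit $0$). $\tau$-transitions: $\overline{a}\langle P\rangle \parallel a(x).Q \parallel R \xrightarrow{\tau} Q\{P/x\} \parallel R$ (communication between an output and an input on the same name in parallel; up to associativity/commutativity of $\parallel$, with inputs/outputs under input prefixes or inside messages unable to act). CK machine: values $v ::= x \mid \lambda x.t$; terms $t,s ::= v \mid t\,s$; stacks $\pi ::= [\mathrm{arg}\ t]::\pi \mid [\mathrm{fun}\ v]::\pi \mid []$; configurations $C ::= \langle t, \pi\rangle_{\mathrm{ev}} \mid \langle \pi, v\rangle_{\mathrm{cont}}$. Transitions: $\langle t\,s, \pi\rangle_{\mathrm{ev}} \to \langle t, [\mathrm{arg}\ s]::\pi\rangle_{\mathrm{ev}}$; $\langle v,\pi\rangle_{\mathrm{ev}}\to\langle\pi,v\rangle_{\mathrm{cont}}$; $\langle [\mathrm{arg}\ t]::\pi, v\rangle_{\mathrm{cont}} \to \langle t, [\mathrm{fun}\ v]::\pi\rangle_{\mathrm{ev}}$; $\langle [\mathrm{fun}\ \lambda x.t]::\pi, v\rangle_{\mathrm{cont}}\to\langle t\{v/x\},\pi\rangle_{\mathrm{ev}}$.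 Translation (channel names $c$, $val$, $b$; $p$ fresh): $[\![\langle t,\pi\rangle_{\mathrm{ev}}]\!] = [\![t]\!] \parallel \overline{c}\langle[\![\pi]\!]\rangle$; $[\![\langle\pi, v\rangle_{\mathrm{cont}}]\!] = [\![\pi]\!] \parallel \overline{val}\langle [\![v]\!]_v\rangle$; $[\![[]]\!] = \overline{b}\langle 0\rangle$; $[\![[\mathrm{arg}\ t]::\pi]\!] = \mathrm{Arg}([\![t]\!],[\![\pi]\!])$; $[\![[\mathrm{fun}\ v]::\pi]\!] = \mathrm{Fun}([\![v]\!]_v,[\![\pi]\!])$; $\mathrm{Arg}(P_t,P_\pi) = val(x).(P_t \parallel \overline{c}\langle \mathrm{Fun}(x, P_\pi)\rangle)$; $\mathrm{Fun}(P_v,P_\pi) = P_v \parallel \overline{c}\langle P_\pi\rangle$; $[\![x]\!]_v = x$; $[\![\lambda x.t]\!]_v = val(x).[\![t]\!]$; $[\![v]\!] = c(p).(p \parallel \overline{val}\langle[\![v]\!]_v\rangle)$; $[\![t\,s]\!] = c(p).([\![t]\!] \parallel \overline{c}\langle\mathrm{Arg}([\![s]\!], p)\rangle)$. *)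

theory Defs
  imports "HOL-Library.Multiset"
begin

text \<open>P || Q is multiset union, 0 is the empty multiset: this builds in associativity,
  commutativity and unit of parallel composition. Process variables are de Bruijn
  indices; a(x).P binds index 0 in P, so syntactic equality is alpha-equivalence.\<close>

type_synonym name = string

datatype atom = In name "atom multiset" | Out name "atom multiset" | PV nat

type_synonym proc = "atom multiset"

primrec shiftA :: "nat \<Rightarrow> atom \<Rightarrow> atom" where
  "shiftA k (PV n) = PV (if n < k then n else Suc n)"
| "shiftA k (In a P) = In a (image_mset (shiftA (Suc k)) P)"
| "shiftA k (Out a P) = Out a (image_mset (shiftA k) P)"

definition shiftP :: "nat \<Rightarrow> proc \<Rightarrow> proc" where
  "shiftP k P = image_mset (shiftA k) P"

primrec substA :: "nat \<Rightarrow> proc \<Rightarrow> atom \<Rightarrow> proc" where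
  "substA k R (PV n) = (if n = k then R else if n < k then {#PV n#} else {#PV (n - 1)#})"
| "substA k R (In a P) = {# In a (\<Sum>\<^sub># (image_mset (substA (Suc k) (shiftP 0 R)) P)) #}"
| "substA k R (Out a P) = {# Out a (\<Sum>\<^sub># (image_mset (substA k R) P)) #}"

definition substP :: "nat \<Rightarrow> proc \<Rightarrow> proc \<Rightarrow> proc" where
  "substP k R Q = \<Sum>\<^sub># (image_mset (substA k R) Q)"

inductive tau :: "proc \<Rightarrow> proc \<Rightarrow> bool" where
  comm: "tau ({# Out a P, In a Q #} + R) (substP 0 P Q + R)"

datatype tm = V val | App tm tm
     and val = X nat | Lam tm

primrec liftT :: "nat \<Rightarrow> tm \<Rightarrow> tm" and liftV :: "nat \<Rightarrow> val \<Rightarrow> val" where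
  "liftT k (V v) = V (liftV k v)"
| "liftT k (App t s) = App (liftT k t) (liftT k s)"
| "liftV k (X n) = X (if n < k then n else Suc n)"
| "liftV k (Lam t) = Lam (liftT (Suc k) t)"

primrec substT :: "nat \<Rightarrow> val \<Rightarrow> tm \<Rightarrow> tm" and substV :: "nat \<Rightarrow> val \<Rightarrow> val \<Rightarrow> val" where
  "substT k w (V v) = V (substV k w v)"
| "substT k w (App t s) = App (substT k w t) (substT k w s)"
| "substV k w (X n) = (if n = k then w else if n < k then X n else X (n - 1))"
| "substV k w (Lam t) = Lam (substT (Suc k) (liftV 0 w) t)"

datatype frame = FArg tm | FFun val

type_synonym stack = "frame list"

datatype conf = Ev tm stack | Cont stack val

inductive ck_step :: "conf \<Rightarrow> conf \<Rightarrow> bool" where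
  app:  "ck_step (Ev (App t s) \<pi>) (Ev t (FArg s # \<pi>))"
| val:  "ck_step (Ev (V v) \<pi>) (Cont \<pi> v)"
| arg:  "ck_step (Cont (FArg t # \<pi>) v) (Ev t (FFun v # \<pi>))"
| beta: "ck_step (Cont (FFun (Lam t) # \<pi>) v) (Ev (substT 0 v t) \<pi>)"

definition ch_c :: name where "ch_c = ''c''"
definition ch_val :: name where "ch_val = ''val''"
definition ch_b :: name where "ch_b = ''b''"

definition FunP :: "proc \<Rightarrow> proc \<Rightarrow> proc" where
  "FunP Pv Ppi = Pv + {# Out ch_c Ppi #}"

definition ArgP :: "proc \<Rightarrow> proc \<Rightarrow> proc" where
  "ArgP Pt Ppi = {# In ch_val (shiftP 0 Pt + {# Out ch_c (FunP {#PV 0#} (shiftP 0 Ppi)) #}) #}"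

primrec trT :: "tm \<Rightarrow> proc" and trV :: "val \<Rightarrow> proc" where
  "trT (V v) = {# In ch_c ({#PV 0#} + {# Out ch_val (shiftP 0 (trV v)) #}) #}"
| "trT (App t s) = {# In ch_c (shiftP 0 (trT t) + {# Out ch_c (ArgP (shiftP 0 (trT s)) {#PV 0#}) #}) #}"
| "trV (X n) = {# PV n #}"
| "trV (Lam t) = {# In ch_val (trT t) #}"

primrec trS :: "stack \<Rightarrow> proc" where
  "trS [] = {# Out ch_b {#} #}"
| "trS (f # \<pi>) = (case f of FArg t \<Rightarrow> ArgP (trT t) (trS \<pi>) | FFun v \<Rightarrow> FunP (trV v) (trS \<pi>))"

primrec trC :: "conf \<Rightarrow> proc" where
  "trC (Ev t \<pi>) = trT t + {# Out ch_c (trS \<pi>) #}"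
| "trC (Cont \<pi> v) = trS \<pi> + {# Out ch_val (trV v) #}"

end

theory Submission
  imports Defs
begin

(* The translation commutes with de Bruijn shifting and substitution, so a
   beta-step, which the translation performs as a communication on val, lands
   exactly on the translation of the contracted term. Each CK rule is matched by
   one communication; conversely a translated configuration contains exactly one
   output/input pair on a common channel at top level, namely the one that
   implements its CK step, so every tau-successor is again a translation. *)

lemma shiftP_empty [simp]: "shiftP k {#} = {#}"
  by (simp add: shiftP_def)

lemma shiftP_add [simp]: "shiftP k (A + B) = shiftP k A + shiftP k B"
  by (simp add: shiftP_def)

lemma shiftP_add_mset [simp]: "shiftP k (add_mset a A) = add_mset (shiftA k a) (shiftP k A)"
  by (simp add: shiftP_def)

lemma shiftP_sum_mset: "shiftP k (\<Sum>\<^sub># M) = \<Sum>\<^sub># (image_mset (shiftP k) M)"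
  by (induction M) auto

lemma substP_empty [simp]: "substP k R {#} = {#}"
  by (simp add: substP_def)

lemma substP_add [simp]: "substP k R (A + B) = substP k R A + substP k R B"
  by (simp add: substP_def)

lemma substP_add_mset [simp]: "substP k R (add_mset a A) = substA k R a + substP k R A"
  by (simp add: substP_def)

lemma shiftA_In [simp]: "shiftA k (In a P) = In a (shiftP (Suc k) P)"
  by (simp add: shiftP_def)

lemma shiftA_Out [simp]: "shiftA k (Out a P) = Out a (shiftP k P)"
  by (simp add: shiftP_def)

lemma substA_In [simp]: "substA k R (In a P) = {#In a (substP (Suc k) (shiftP 0 R) P)#}"
  by (simp add: substP_def)

lemma substA_Out [simp]: "substA k R (Out a P) = {#Out a (substP k R P)#}"
  by (simp add: substP_def)

declare shiftA.simps(2,3) [simp del] substA.simps(2,3) [simp del]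

lemma substP_shiftP_eq_sum:
  "substP k R (shiftP j Q) = \<Sum>\<^sub># (image_mset (\<lambda>a. substA k R (shiftA j a)) Q)"
  by (simp add: substP_def shiftP_def image_mset.compositionality comp_def)

lemma shiftP_substP_eq_sum:
  "shiftP j (substP k R Q) = \<Sum>\<^sub># (image_mset (\<lambda>a. shiftP j (substA k R a)) Q)"
  by (simp add: substP_def shiftP_sum_mset image_mset.compositionality comp_def)

lemma substA_shiftA_cancel: "substA k R (shiftA k a) = {#a#}"
proof (induction a arbitrary: k R)
  case (In a P)
  then have "substP (Suc k) (shiftP 0 R) (shiftP (Suc k) P) = P"
    by (simp add: substP_shiftP_eq_sum cong: image_mset_cong)
  then show ?case by simp
next
  case (Out a P)
  then have "substP k R (shiftP k P) = P"
    by (simp add: substP_shiftP_eq_sum cong: image_mset_cong)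
  then show ?case by simp
qed auto

lemma substP_shiftP_cancel: "substP k R (shiftP k Q) = Q"
  by (simp add: substP_shiftP_eq_sum substA_shiftA_cancel)

lemma shiftA_shiftA_commute:
  "j \<le> k \<Longrightarrow> shiftA (Suc k) (shiftA j a) = shiftA j (shiftA k a)"
proof (induction a arbitrary: j k)
  case (In a P)
  then have "shiftP (Suc (Suc k)) (shiftP (Suc j) P) = shiftP (Suc j) (shiftP (Suc k) P)"
    by (simp add: shiftP_def image_mset.compositionality comp_def cong: image_mset_cong)
  then show ?case by simp
next
  case (Out a P)
  then have "shiftP (Suc k) (shiftP j P) = shiftP j (shiftP k P)"
    by (simp add: shiftP_def image_mset.compositionality comp_def cong: image_mset_cong)
  then show ?case by simp
qed auto

lemma shiftP_shiftP_commute: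
  "j \<le> k \<Longrightarrow> shiftP (Suc k) (shiftP j Q) = shiftP j (shiftP k Q)"
  by (simp add: shiftP_def image_mset.compositionality comp_def shiftA_shiftA_commute)

lemma shiftP_substA_commute:
  "j \<le> k \<Longrightarrow> shiftP j (substA k R a) = substA (Suc k) (shiftP j R) (shiftA j a)"
proof (induction a arbitrary: j k R)
  case (In a P)
  then have "shiftP (Suc j) (substP (Suc k) (shiftP 0 R) P) =
             substP (Suc (Suc k)) (shiftP (Suc j) (shiftP 0 R)) (shiftP (Suc j) P)"
    by (simp add: substP_shiftP_eq_sum shiftP_substP_eq_sum cong: image_mset_cong)
  then show ?case by (simp add: shiftP_shiftP_commute)
next
  case (Out a P)
  then have "shiftP j (substP k R P) = substP (Suc k) (shiftP j R) (shiftP j P)"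
    by (simp add: substP_shiftP_eq_sum shiftP_substP_eq_sum cong: image_mset_cong)
  then show ?case by simp
qed (auto simp: shiftP_def)

lemma shiftP_substP_commute:
  "j \<le> k \<Longrightarrow> shiftP j (substP k R Q) = substP (Suc k) (shiftP j R) (shiftP j Q)"
  by (simp add: substP_shiftP_eq_sum shiftP_substP_eq_sum shiftP_substA_commute)

lemma substP_Suc_shiftP_0: "substP (Suc k) (shiftP 0 R) (shiftP 0 Q) = shiftP 0 (substP k R Q)"
  by (simp add: shiftP_substP_commute)

lemma trT_liftT: "trT (liftT k t) = shiftP k (trT t)"
  and trV_liftV: "trV (liftV k v) = shiftP k (trV v)"
proof (induction t and v arbitrary: k and k)
  case (App t s)
  then show ?case by (simp add: shiftP_shiftP_commute ArgP_def FunP_def)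
qed (simp_all add: shiftP_shiftP_commute)

lemma trT_substT: "trT (substT k w t) = substP k (trV w) (trT t)"
  and trV_substV: "trV (substV k w v) = substP k (trV w) (trV v)"
proof (induction t and v arbitrary: k w and k w)
  case (V v)
  then show ?case by (simp add: substP_Suc_shiftP_0 trV_liftV)
next
  case (App t s)
  then show ?case by (simp add: substP_Suc_shiftP_0 trV_liftV ArgP_def FunP_def)
next
  case (Lam t)
  then show ?case by (simp add: trV_liftV)
qed simp

lemma tau_redexI: "P = {#Out a S, In a Q#} + R \<Longrightarrow> P' = substP 0 S Q + R \<Longrightarrow> tau P P'"
  using tau.comm by blast

lemma tau_redexE:
  assumes "tau P P'"
  obtains a S Q R where "P = add_mset (Out a S) (add_mset (In a Q) R)" "P' = substP 0 S Q + R"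
  using assms by (cases rule: tau.cases) auto

lemma channels_distinct [simp]: "ch_c \<noteq> ch_val" "ch_val \<noteq> ch_c" "ch_b \<noteq> ch_val" "ch_b \<noteq> ch_c"
  by (simp_all add: ch_c_def ch_val_def ch_b_def)

lemma ck_step_tau: "ck_step C C' \<Longrightarrow> tau (trC C) (trC C')"
proof (induction rule: ck_step.induct)
  case (app t s \<pi>)
  show ?case
    by (rule tau_redexI[where a = ch_c and S = "trS \<pi>" and R = "{#}"
          and Q = "shiftP 0 (trT t) + {#Out ch_c (ArgP (shiftP 0 (trT s)) {#PV 0#})#}"])
      (simp_all add: substP_shiftP_cancel substP_Suc_shiftP_0 ArgP_def FunP_def add_mset_commute)
next
  case (val v \<pi>)
  show ?case
    by (rule tau_redexI[where a = ch_c and S = "trS \<pi>" and R = "{#}"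
          and Q = "{#PV 0#} + {#Out ch_val (shiftP 0 (trV v))#}"])
      (simp_all add: substP_shiftP_cancel add_mset_commute)
next
  case (arg t \<pi> v)
  show ?case
    by (rule tau_redexI[where a = ch_val and S = "trV v" and R = "{#}"
          and Q = "shiftP 0 (trT t) + {#Out ch_c (FunP {#PV 0#} (shiftP 0 (trS \<pi>)))#}"])
      (simp_all add: substP_shiftP_cancel ArgP_def FunP_def add_mset_commute)
next
  case (beta t \<pi> v)
  show ?case
    by (rule tau_redexI[where a = ch_val and S = "trV v" and R = "{#Out ch_c (trS \<pi>)#}"
          and Q = "trT t"])
      (simp_all add: trT_substT FunP_def add_mset_commute)
qed

lemma conf_cases:
  obtains (ev_val) v \<pi> where "C = Ev (V v) \<pi>"
  | (ev_app) t s \<pi> where "C = Ev (App t s) \<pi>"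
  | (cont_nil) v where "C = Cont [] v"
  | (cont_arg) t \<pi> v where "C = Cont (FArg t # \<pi>) v"
  | (cont_fun_var) n \<pi> v where "C = Cont (FFun (X n) # \<pi>) v"
  | (cont_fun_lam) t \<pi> v where "C = Cont (FFun (Lam t) # \<pi>) v"
proof (cases C)
  case (Ev t \<pi>)
  then show ?thesis using that by (cases t) auto
next
  case (Cont \<pi> v)
  then show ?thesis using that
    by (metis list.exhaust frame.exhaust val.exhaust)
qed

lemma tau_trC_ck_step:
  assumes "tau (trC C) P"
  shows "\<exists>C'. ck_step C C' \<and> P = trC C'"
proof -
  from assms obtain a S Q R where redex: "trC C = add_mset (Out a S) (add_mset (In a Q) R)"
    and P: "P = substP 0 S Q + R"
    by (rule tau_redexE)
  have out: "Out a S \<in># trC C" and inp: "In a Q \<in># trC C - {#Out a S#}"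
    and R: "R = trC C - {#Out a S#} - {#In a Q#}"
    using redex by simp_all
  show ?thesis
  proof (cases C rule: conf_cases)
    case (ev_val v \<pi>)
    with out inp R P have "P = trC (Cont \<pi> v)"
      by (auto simp: substP_shiftP_cancel)
    with ev_val show ?thesis by (blast intro: ck_step.val)
  next
    case (ev_app t s \<pi>)
    with out inp R P have "P = trC (Ev t (FArg s # \<pi>))"
      by (auto simp: substP_shiftP_cancel substP_Suc_shiftP_0 ArgP_def FunP_def)
    with ev_app show ?thesis by (blast intro: ck_step.app)
  next
    case (cont_nil v)
    with out inp show ?thesis by auto
  next
    case (cont_arg t \<pi> v)
    with out inp R P have "P = trC (Ev t (FFun v # \<pi>))"
      by (auto simp: substP_shiftP_cancel ArgP_def FunP_def)
    with cont_arg show ?thesis by (blast intro: ck_step.arg)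
  next
    case (cont_fun_var n \<pi> v)
    with out inp show ?thesis by (auto simp: FunP_def)
  next
    case (cont_fun_lam t \<pi> v)
    with out inp R P have "P = trC (Ev (substT 0 v t) \<pi>)"
      by (auto simp: trT_substT FunP_def)
    with cont_fun_lam show ?thesis by (blast intro: ck_step.beta)
  qed
qed

theorem theorem6p1:
  shows "(\<forall>C C'. ck_step C C' \<longrightarrow> tau (trC C) (trC C')) \<and>
         (\<forall>C P. tau (trC C) P \<longrightarrow> (\<exists>C'. P = trC C'))"
  using ck_step_tau tau_trC_ck_step by blast

end
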